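(* Let $\mathbb{U},B\in\mathbb{R}^{n\times n}$ and consider the bilinear system $z_{t+1}=\mathbb{U}z_t+u_tBz_t$, $z_t\in\mathbb{R}^n$, $u_t\in\mathbb{R}$. Let $Q=Q^\top\succ0$ in $\mathbb{R}^{n\times n}$ and $y\in\mathbb{R}^n$ be such that, for some real number $\varepsilon\neq0$, the matrix inequality \[ \begin{pmatrix} -Q & 0 & y & Q\mathbb{U}^\top\\ 0 & -\varepsilon Q & 0 & QB^\top\\ y^\top & 0 & -\frac{1}{\varepsilon} & 0\\ \mathbb{U}Q & BQ & 0 & -Q \end{pmatrix}\prec 0 \] holds. Then the linear state feedback $u_t=k^\top z_t$ with gain $k=Q^{-1}y$ stabilizes the bilinear system inside the ellipsoid $\mathscr{E}=\{z\in\mathbb{R}^n: z^\top Q^{-1}z\le1\}$, and the quadratic form $V(z)=z^\top Q^{-1}z$ is a control Lyapunov function for the bilinear system.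
   Context: $\prec0$ denotes negative definiteness of a symmetric matrix. A discrete-time control Lyapunov function is a radially unbounded positive definite function $V$ with $V(0)=0$, $V(z)>0$ for $z\ne0$, such that for every state $z_t$ there exists an input $u_t$ with $V(z_{t+1})-V(z_t)<0$. "Stabilizes inside $\mathscr{E}$" means that along the closed-loop system $z_{t+1}=\mathbb{U}z_t+(k^\top z_t)Bz_t$ the quantity $V$ strictly decreases for nonzero states in $\mathscr{E}$. *)

theory Defs
  imports "HOL-Analysis.Analysis"
begin

definition pos_def_mat :: "real^'m^'m \<Rightarrow> bool" where
  "pos_def_mat M \<longleftrightarrow> transpose M = M \<and> (\<forall>x. x \<noteq> 0 \<longrightarrow> x \<bullet> (M *v x) > 0)"

definition neg_def_mat :: "real^'m^'m \<Rightarrow> bool" where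
  "neg_def_mat M \<longleftrightarrow> transpose M = M \<and> (\<forall>x. x \<noteq> 0 \<longrightarrow> x \<bullet> (M *v x) < 0)"

text \<open>The (3n+1)x(3n+1) block matrix of the LMI. Block index set:
  Inl i (first block), Inr (Inl i) (second), Inr (Inr (Inl ())) (scalar), Inr (Inr (Inr i)) (fourth).\<close>
definition lmi_matrix ::
  "real^'n^'n \<Rightarrow> real^'n^'n \<Rightarrow> real^'n^'n \<Rightarrow> real^'n \<Rightarrow> real
    \<Rightarrow> real^('n + 'n + unit + 'n)^('n + 'n + unit + 'n)" where
  "lmi_matrix U B Q y \<epsilon> = (\<chi> r s. case (r, s) of
      (Inl i, Inl j) \<Rightarrow> - (Q$i$j)
    | (Inl i, Inr (Inl j)) \<Rightarrow> 0
    | (Inl i, Inr (Inr (Inl _))) \<Rightarrow> y$i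
    | (Inl i, Inr (Inr (Inr j))) \<Rightarrow> (Q ** transpose U)$i$j
    | (Inr (Inl i), Inl j) \<Rightarrow> 0
    | (Inr (Inl i), Inr (Inl j)) \<Rightarrow> - \<epsilon> * Q$i$j
    | (Inr (Inl i), Inr (Inr (Inl _))) \<Rightarrow> 0
    | (Inr (Inl i), Inr (Inr (Inr j))) \<Rightarrow> (Q ** transpose B)$i$j
    | (Inr (Inr (Inl _)), Inl j) \<Rightarrow> y$j
    | (Inr (Inr (Inl _)), Inr (Inl j)) \<Rightarrow> 0
    | (Inr (Inr (Inl _)), Inr (Inr (Inl _))) \<Rightarrow> - 1 / \<epsilon>
    | (Inr (Inr (Inl _)), Inr (Inr (Inr j))) \<Rightarrow> 0
    | (Inr (Inr (Inr i)), Inl j) \<Rightarrow> (U ** Q)$i$j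
    | (Inr (Inr (Inr i)), Inr (Inl j)) \<Rightarrow> (B ** Q)$i$j
    | (Inr (Inr (Inr i)), Inr (Inr (Inl _))) \<Rightarrow> 0
    | (Inr (Inr (Inr i)), Inr (Inr (Inr j))) \<Rightarrow> - (Q$i$j))"

definition bilin_step :: "real^'n^'n \<Rightarrow> real^'n^'n \<Rightarrow> real^'n \<Rightarrow> real \<Rightarrow> real^'n" where
  "bilin_step U B z u = U *v z + u *\<^sub>R (B *v z)"

definition is_clf :: "real^'n^'n \<Rightarrow> real^'n^'n \<Rightarrow> (real^'n \<Rightarrow> real) \<Rightarrow> bool" where
  "is_clf U B V \<longleftrightarrow> V 0 = 0 \<and> (\<forall>z. z \<noteq> 0 \<longrightarrow> V z > 0)
     \<and> filterlim V at_top at_infinity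
     \<and> (\<forall>z. z \<noteq> 0 \<longrightarrow> (\<exists>u. V (bilin_step U B z u) - V z < 0))"

definition stabilizes_inside ::
  "real^'n^'n \<Rightarrow> real^'n^'n \<Rightarrow> real^'n \<Rightarrow> (real^'n \<Rightarrow> real) \<Rightarrow> (real^'n) set \<Rightarrow> bool" where
  "stabilizes_inside U B k V E \<longleftrightarrow>
     (\<forall>z\<in>E. z \<noteq> 0 \<longrightarrow> V (bilin_step U B z (k \<bullet> z)) < V z)"

end

theory Submission
  imports Defs
begin

text \<open>Evaluate the quadratic form of the LMI matrix at the block vector
  \<open>(Q\<inverse>z, u Q\<inverse>z, c, Q\<inverse>z\<^sup>+)\<close>, where \<open>z\<^sup>+ = U z + u B z\<close> is the successor state.
  With \<open>V z = z\<^sup>T Q\<inverse> z\<close> and \<open>k = Q\<inverse>y\<close>, negativity of that form reads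
  \<open>V z\<^sup>+ - V z - \<epsilon> u\<^sup>2 V z + 2 c k\<^sup>T z - c\<^sup>2/\<epsilon> < 0\<close>.
  The second diagonal block forces \<open>\<epsilon> > 0\<close>. For \<open>u = k\<^sup>T z\<close> and \<open>c = \<epsilon> u\<close> this gives
  \<open>V z\<^sup>+ - V z < \<epsilon> u\<^sup>2 (V z - 1) \<le> 0\<close> inside the ellipsoid, and \<open>u = c = 0\<close> gives
  \<open>V z\<^sup>+ < V z\<close> everywhere, so \<open>V\<close> is a control Lyapunov function.\<close>

lemma symmetric_matrix_inner_commute:
  fixes P :: "real^'n^'n"
  assumes "transpose P = P"
  shows "x \<bullet> (P *v y) = y \<bullet> (P *v x)"
  by (metis assms dot_lmul_matrix inner_commute transpose_matrix_vector)

lemma invertible_matrix_inv: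
  fixes A :: "'a::semiring_1^'n^'m"
  assumes "invertible A"
  shows "A ** matrix_inv A = mat 1" "matrix_inv A ** A = mat 1"
proof -
  have "A ** matrix_inv A = mat 1 \<and> matrix_inv A ** A = mat 1"
    using assms unfolding invertible_def matrix_inv_def by (rule someI_ex)
  then show "A ** matrix_inv A = mat 1" "matrix_inv A ** A = mat 1" by auto
qed

lemma invertible_matrix_inv_vector:
  fixes A :: "'a::comm_semiring_1^'n^'m"
  assumes "invertible A"
  shows "A *v (matrix_inv A *v x) = x"
  by (simp add: matrix_vector_mul_assoc invertible_matrix_inv[OF assms])

lemma pos_def_mat_invertible:
  assumes "pos_def_mat Q"
  shows "invertible Q"
proof -
  have "Q *v x = 0 \<Longrightarrow> x = 0" for x
    using assms unfolding pos_def_mat_def by force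
  then show ?thesis
    by (simp add: invertible_left_inverse matrix_left_invertible_ker)
qed

lemma pos_def_mat_matrix_inv:
  fixes Q :: "real^'n^'n"
  assumes "pos_def_mat Q"
  shows "pos_def_mat (matrix_inv Q)"
proof -
  let ?P = "matrix_inv Q"
  have Q_sym: "transpose Q = Q"
    using assms by (simp add: pos_def_mat_def)
  have Q_inv: "invertible Q"
    using pos_def_mat_invertible[OF assms] .
  have PQ: "?P ** Q = mat 1"
    using invertible_matrix_inv[OF Q_inv] by auto
  have "Q ** transpose ?P = mat 1"
    using arg_cong[OF PQ, of transpose] by (simp add: matrix_transpose_mul Q_sym)
  then have "?P ** (Q ** transpose ?P) = ?P"
    by simp
  then have P_sym: "transpose ?P = ?P"
    by (simp add: matrix_mul_assoc PQ)
  have "x \<bullet> (?P *v x) > 0" if "x \<noteq> 0" for x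
  proof -
    have QPx: "Q *v (?P *v x) = x"
      using invertible_matrix_inv_vector[OF Q_inv] .
    then have "?P *v x \<noteq> 0"
      using that by auto
    then have "(?P *v x) \<bullet> (Q *v (?P *v x)) > 0"
      using assms by (simp add: pos_def_mat_def)
    then show ?thesis
      by (simp add: QPx inner_commute)
  qed
  with P_sym show ?thesis
    by (simp add: pos_def_mat_def)
qed

lemma pos_def_mat_quadratic_lower_bound:
  fixes P :: "real^'n^'n"
  assumes "pos_def_mat P"
  obtains m where "m > 0" "\<And>z. m * (norm z)\<^sup>2 \<le> z \<bullet> (P *v z)"
proof -
  let ?V = "\<lambda>z. z \<bullet> (P *v z)"
  have "continuous_on (sphere 0 1) ?V"
    by (intro continuous_intros)
  moreover have "sphere (0::real^'n) 1 \<noteq> {}"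
    by simp
  ultimately obtain x0 :: "real^'n"
    where x0: "x0 \<in> sphere 0 1" "\<And>x. x \<in> sphere 0 1 \<Longrightarrow> ?V x0 \<le> ?V x"
    using continuous_attains_inf[OF compact_sphere] by blast
  have "?V x0 > 0"
    using assms x0(1) unfolding pos_def_mat_def by (metis mem_sphere_0 norm_zero zero_neq_one)
  moreover have "?V x0 * (norm z)\<^sup>2 \<le> ?V z" for z
  proof (cases "z = 0")
    case False
    then have "?V x0 \<le> ?V ((1 / norm z) *\<^sub>R z)"
      by (intro x0(2)) simp
    also have "\<dots> = ?V z / (norm z)\<^sup>2"
      by (simp add: matrix_vector_mult_scaleR power2_eq_square)
    finally show ?thesis
      using False by (simp add: field_simps)
  qed simp
  ultimately show ?thesis
    using that by blast
qed

lemma pos_def_mat_quadratic_at_infinity: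
  fixes P :: "real^'n^'n"
  assumes "pos_def_mat P"
  shows "filterlim (\<lambda>z. z \<bullet> (P *v z)) at_top at_infinity"
proof -
  obtain m where m: "m > 0" "\<And>z. m * (norm z)\<^sup>2 \<le> z \<bullet> (P *v z)"
    using pos_def_mat_quadratic_lower_bound[OF assms] by blast
  have "filterlim (\<lambda>z::real^'n. (norm z)\<^sup>2) at_top at_infinity"
    by (rule filterlim_pow_at_top[OF _ filterlim_norm_at_top]) simp
  then have "filterlim (\<lambda>z::real^'n. m * (norm z)\<^sup>2) at_top at_infinity"
    by (rule filterlim_tendsto_pos_mult_at_top[OF tendsto_const \<open>m > 0\<close>])
  then show ?thesis
    by (rule filterlim_at_top_mono) (simp add: m(2))
qed

definition block_vec :: "real^'n \<Rightarrow> real^'n \<Rightarrow> real \<Rightarrow> real^'n \<Rightarrow> real^('n + 'n + unit + 'n)" where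
  "block_vec a b c d = (\<chi> r. case r of Inl i \<Rightarrow> a$i | Inr (Inl i) \<Rightarrow> b$i
      | Inr (Inr (Inl _)) \<Rightarrow> c | Inr (Inr (Inr i)) \<Rightarrow> d$i)"

lemma block_vec_eq_0_iff:
  "block_vec a b c d = 0 \<longleftrightarrow> a = 0 \<and> b = 0 \<and> c = 0 \<and> d = 0"
proof
  assume h: "block_vec a b c d = 0"
  have "a $ i = 0" "b $ i = 0" "c = 0" "d $ i = 0" for i
    using arg_cong[OF h, of "\<lambda>v. v $ Inl i"] arg_cong[OF h, of "\<lambda>v. v $ Inr (Inl i)"]
      arg_cong[OF h, of "\<lambda>v. v $ Inr (Inr (Inl ()))"] arg_cong[OF h, of "\<lambda>v. v $ Inr (Inr (Inr i))"]
    by (simp_all add: block_vec_def)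
  then show "a = 0 \<and> b = 0 \<and> c = 0 \<and> d = 0"
    by (simp add: vec_eq_iff)
qed (simp add: block_vec_def vec_eq_iff split: sum.split)

lemma sum_UNIV_Plus:
  "sum f (UNIV :: ('a::finite + 'b::finite) set) = (\<Sum>i\<in>UNIV. f (Inl i)) + (\<Sum>i\<in>UNIV. f (Inr i))"
  by (subst UNIV_Plus_UNIV[symmetric], subst sum.Plus) (auto simp: comp_def)

lemma lmi_matrix_quadratic_form:
  fixes U B Q :: "real^'n^'n"
  assumes "transpose Q = Q"
  shows "block_vec a b c d \<bullet> (lmi_matrix U B Q y \<epsilon> *v block_vec a b c d) =
     - (a \<bullet> (Q *v a)) - \<epsilon> * (b \<bullet> (Q *v b)) + 2 * c * (y \<bullet> a) - c\<^sup>2 / \<epsilon>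
     + 2 * (d \<bullet> (U *v (Q *v a) + B *v (Q *v b))) - d \<bullet> (Q *v d)"
proof -
  have cross: "x \<bullet> ((Q ** transpose M) *v d) = d \<bullet> ((M ** Q) *v x)" for x and M :: "real^'n^'n"
  proof -
    have "x \<bullet> ((Q ** transpose M) *v d) = (transpose (Q ** transpose M) *v x) \<bullet> d"
      by (simp add: dot_lmul_matrix)
    also have "transpose (Q ** transpose M) = M ** Q"
      using assms by (simp add: matrix_transpose_mul)
    finally show ?thesis
      by (simp add: inner_commute)
  qed
  have "block_vec a b c d \<bullet> (lmi_matrix U B Q y \<epsilon> *v block_vec a b c d) =
     - (a \<bullet> (Q *v a)) - \<epsilon> * (b \<bullet> (Q *v b)) + 2 * c * (y \<bullet> a) - c\<^sup>2 / \<epsilon>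
     + a \<bullet> ((Q ** transpose U) *v d) + d \<bullet> ((U ** Q) *v a)
     + b \<bullet> ((Q ** transpose B) *v d) + d \<bullet> ((B ** Q) *v b) - d \<bullet> (Q *v d)"
    unfolding inner_vec_def matrix_vector_mult_def block_vec_def lmi_matrix_def
    by (simp add: sum_UNIV_Plus UNIV_unit algebra_simps sum.distrib sum_distrib_left
        sum_subtractf sum_negf power2_eq_square)
  then show ?thesis
    by (simp add: cross matrix_vector_mul_assoc inner_add_right)
qed

lemma lmi_quadratic_form_neg:
  assumes "neg_def_mat (lmi_matrix U B Q y \<epsilon>)" "a \<noteq> 0 \<or> b \<noteq> 0"
  shows "block_vec a b c d \<bullet> (lmi_matrix U B Q y \<epsilon> *v block_vec a b c d) < 0"
proof -
  have "block_vec a b c d \<noteq> 0"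
    using assms(2) by (auto simp: block_vec_eq_0_iff)
  then show ?thesis
    using assms(1) by (simp add: neg_def_mat_def)
qed

lemma lmi_imp_epsilon_pos:
  fixes U B Q :: "real^'n^'n"
  assumes "pos_def_mat Q" "neg_def_mat (lmi_matrix U B Q y \<epsilon>)"
  shows "\<epsilon> > 0"
proof -
  obtain b :: "real^'n" where "b \<noteq> 0"
    using zero_neq_one by blast
  then have pos: "b \<bullet> (Q *v b) > 0" and
    "block_vec 0 b 0 0 \<bullet> (lmi_matrix U B Q y \<epsilon> *v block_vec 0 b 0 0) < 0"
    using assms by (simp_all add: pos_def_mat_def lmi_quadratic_form_neg)
  then have "\<epsilon> * (b \<bullet> (Q *v b)) > 0"
    using assms(1) by (simp add: pos_def_mat_def lmi_matrix_quadratic_form)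
  with pos show ?thesis
    by (simp add: zero_less_mult_iff)
qed

lemma lmi_one_step_inequality:
  fixes U B Q :: "real^'n^'n"
  assumes Q: "pos_def_mat Q" and lmi: "neg_def_mat (lmi_matrix U B Q y \<epsilon>)" and "z \<noteq> 0"
  defines "V \<equiv> \<lambda>z. z \<bullet> (matrix_inv Q *v z)"
  shows "V (bilin_step U B z u) - V z - \<epsilon> * u\<^sup>2 * V z + 2 * c * ((matrix_inv Q *v y) \<bullet> z) - c\<^sup>2 / \<epsilon> < 0"
proof -
  let ?P = "matrix_inv Q"
  define w where "w = bilin_step U B z u"
  have Q_sym: "transpose Q = Q" and P_sym: "transpose ?P = ?P"
    using Q pos_def_mat_matrix_inv[OF Q] by (simp_all add: pos_def_mat_def)
  have QP: "Q *v (?P *v x) = x" for x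
    by (rule invertible_matrix_inv_vector[OF pos_def_mat_invertible[OF Q]])
  have "?P *v z \<noteq> 0"
    using QP[of z] \<open>z \<noteq> 0\<close> by auto
  then have "block_vec (?P *v z) (u *\<^sub>R (?P *v z)) c (?P *v w)
      \<bullet> (lmi_matrix U B Q y \<epsilon> *v block_vec (?P *v z) (u *\<^sub>R (?P *v z)) c (?P *v w)) < 0"
    using lmi by (simp add: lmi_quadratic_form_neg)
  moreover have "U *v (Q *v (?P *v z)) + B *v (Q *v (u *\<^sub>R (?P *v z))) = w"
    by (simp add: QP matrix_vector_mult_scaleR w_def bilin_step_def)
  moreover have "(?P *v z) \<bullet> (Q *v (?P *v z)) = V z" "(?P *v w) \<bullet> (Q *v (?P *v w)) = V w"
      "(?P *v w) \<bullet> w = V w" "y \<bullet> (?P *v z) = (?P *v y) \<bullet> z"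
    using symmetric_matrix_inner_commute[OF P_sym, of y z]
    by (simp_all add: QP V_def inner_commute)
  ultimately show ?thesis
    by (simp add: lmi_matrix_quadratic_form[OF Q_sym] matrix_vector_mult_scaleR power2_eq_square w_def)
qed

theorem theorem4:
  fixes U B Q :: "real^'n^'n" and y :: "real^'n" and \<epsilon> :: real
  assumes "pos_def_mat Q"
    and "\<epsilon> \<noteq> 0"
    and "neg_def_mat (lmi_matrix U B Q y \<epsilon>)"
  shows "stabilizes_inside U B (matrix_inv Q *v y) (\<lambda>z. z \<bullet> (matrix_inv Q *v z))
           {z. z \<bullet> (matrix_inv Q *v z) \<le> 1}
       \<and> is_clf U B (\<lambda>z. z \<bullet> (matrix_inv Q *v z))"
proof -
  define k where "k = matrix_inv Q *v y"
  define V where "V = (\<lambda>z. z \<bullet> (matrix_inv Q *v z))"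
  have \<epsilon>_pos: "\<epsilon> > 0"
    using lmi_imp_epsilon_pos[OF assms(1,3)] .
  have one_step: "V (bilin_step U B z u) - V z - \<epsilon> * u\<^sup>2 * V z + 2 * c * (k \<bullet> z) - c\<^sup>2 / \<epsilon> < 0"
    if "z \<noteq> 0" for z u c
    using lmi_one_step_inequality[OF assms(1,3) that] unfolding V_def k_def .
  have "V (bilin_step U B z (k \<bullet> z)) < V z" if "z \<noteq> 0" "V z \<le> 1" for z
  proof -
    let ?u = "k \<bullet> z"
    have "V (bilin_step U B z ?u) - V z + \<epsilon> * ?u\<^sup>2 * (1 - V z) < 0"
      using one_step[OF that(1), of ?u "\<epsilon> * ?u"] \<epsilon>_pos by (simp add: power2_eq_square field_simps)
    moreover have "\<epsilon> * ?u\<^sup>2 * (1 - V z) \<ge> 0"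
      using \<epsilon>_pos that(2) by simp
    ultimately show ?thesis
      by linarith
  qed
  then have "stabilizes_inside U B k V {z. V z \<le> 1}"
    unfolding stabilizes_inside_def by auto
  moreover have "is_clf U B V"
    using pos_def_mat_matrix_inv[OF assms(1)] pos_def_mat_quadratic_at_infinity one_step[of _ 0 0]
    unfolding is_clf_def pos_def_mat_def V_def by fastforce
  ultimately show ?thesis
    unfolding k_def V_def by simp
qed

end
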